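(* Let $A\in\mathbb{R}^{n\times d}$ have i.i.d. rows with mean zero and covariance $\Sigma$, $b\in\mathbb{R}^n$, and $A$ split row-wise into $m$ blocks $A^{(i)}\in\mathbb{R}^{(n/m)\times d}$. Let $f(x)=\frac1{2n}\|Ax-b\|_2^2+\frac\lambda2\|x\|_2^2$ ($\lambda>0$), $g=\nabla f$, $H=\frac1nA^TA+\lambda I$, $d_\lambda=\mathrm{tr}(\Sigma(\Sigma+\lambda I)^{-1})$ with $md_\lambda<n$, and $\tilde H=\left(\frac1m\sum_{i=1}^m\left(\frac{1}{1-\frac{md_\lambda}{n}}\frac mnA^{(i)T}A^{(i)}+\lambda I\right)^{-1}\right)^{-1}$. Let $\omega^\star=\arg\min f$ and $\omega_{t+1}=\omega_t-\tilde p_t$, where $\tilde p_t$ is the output of $s_t$ iterations of the preconditioned conjugate gradient method applied to the linear system $Hp=g(\omega_t)$ with preconditioner $\tilde H^{-1}$ and initial point $0$; set $\Delta_t=\omega_t-\omega^\star$. Let $\alpha_0=\|\Sigma-\frac1nA^TA\|$, $\alpha_1=\|\tilde H^{-1}-\mathbb{E}[\tilde H^{-1}]\|$, $\Omega_0=\mathbb{E}[\tilde H^{-1}]-(\Sigma+\lambda I)^{-1}$, $\alpha=(\sigma_{\max}+\lambda+\alpha_0)(\frac1{\lambda^2}\alpha_0+\alpha_1+\|\Omega_0\|)$, with $\sigma_{\min},\sigma_{\max}$ the extreme eigenvalues of $\Sigma$. Then \[\|\Delta_{t+1}\|\le\frac{\sqrt2\alpha'}{\sqrt{1-\alpha'^2}}\sqrt{\frac{\sigma_{\max}+\lambda+\alpha_0}{\sigma_{\min}+\lambda-\alpha_0}}\|\Delta_t\|,\qquad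 \alpha'=\sqrt{4\left(\frac{1-\sqrt{1-\frac{\alpha}{1-\alpha}}}{1+\sqrt{1-\frac{\alpha}{1-\alpha}}}\right)^{s_t}}.\]
   Context: $\|\cdot\|$ is the Euclidean norm on vectors and the spectral norm on matrices; $n/m$ is an integer. *)

theory Defs
  imports "HOL-Probability.Probability"
begin

definition spec_norm :: "real^'n^'m \<Rightarrow> real" where
  "spec_norm A = onorm (\<lambda>x. A *v x)"

definition eigenvalues :: "real^'n^'n \<Rightarrow> real set" where
  "eigenvalues S = {\<mu>. \<exists>v. v \<noteq> 0 \<and> S *v v = \<mu> *\<^sub>R v}"

text \<open>Preconditioned conjugate gradient for H p = g with preconditioner Pinv
  (i.e. z = Pinv r), initial point 0. State: (iterate x, residual r, direction p).\<close>
definition pcg_step :: "real^'n^'n \<Rightarrow> real^'n^'n \<Rightarrow>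
    ((real^'n) \<times> (real^'n) \<times> (real^'n)) \<Rightarrow> ((real^'n) \<times> (real^'n) \<times> (real^'n))" where
  "pcg_step H Pinv st = (case st of (x, r, p) \<Rightarrow>
     let z = Pinv *v r;
         a = (r \<bullet> z) / (p \<bullet> (H *v p));
         x' = x + a *\<^sub>R p;
         r' = r - a *\<^sub>R (H *v p);
         z' = Pinv *v r';
         beta = (r' \<bullet> z') / (r \<bullet> z);
         p' = z' + beta *\<^sub>R p
     in (x', r', p'))"

definition pcg :: "real^'n^'n \<Rightarrow> real^'n^'n \<Rightarrow> real^'n \<Rightarrow> nat \<Rightarrow> real^'n" where
  "pcg H Pinv g s = fst ((pcg_step H Pinv ^^ s) (0, g, Pinv *v g))"

end

theory Submission
  imports Defs
begin

text \<open>
  Write \<open>\<mu> = sig_min + lam - alpha0\<close> and \<open>L = sig_max + lam + alpha0\<close>. Since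
  \<open>Sigma + lam I - H = Sigma - A\<^sup>TA / n\<close> has norm \<open>alpha0\<close>, the quadratic form of \<open>H\<close>
  lies between \<open>\<mu>\<close> and \<open>L\<close>. Splitting
  \<open>Htinv - H\<inverse> = (Htinv - EHtinv) + Omega0 + ((Sigma + lam I)\<inverse> - H\<inverse>)\<close> and using the
  resolvent identity for the last term gives \<open>\<parallel>Htinv - H\<inverse>\<parallel> \<le> \<delta>\<close> with
  \<open>alpha = L \<delta>\<close>. Hence one preconditioned Richardson step \<open>e \<mapsto> e - Htinv H e\<close> contracts
  the \<open>H\<close>-energy of the error by \<open>alpha\<^sup>2\<close>, and every step of preconditioned conjugate
  gradients does at least as well: its exact line search runs along a direction that differs
  from the preconditioned residual only by an \<open>H\<close>-conjugate vector. As \<open>g w_t = H (w_t - w_star)\<close>,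
  after \<open>s\<close> steps \<open>\<mu> \<parallel>w_next - w_star\<parallel>\<^sup>2 \<le> alpha\<^sup>2\<^sup>s L \<parallel>w_t - w_star\<parallel>\<^sup>2\<close>; finally
  \<open>alpha\<^sup>s \<le> alpha'\<close>, because \<open>alpha\<^sup>2\<close> is at most the ratio \<open>(1 - \<beta>) / (1 + \<beta>)\<close> in the
  definition of \<open>alpha'\<close>.
\<close>

section \<open>Self-adjoint matrices and their inverses\<close>

lemma mat_vector_mult [simp]: "(mat c :: real^'n^'n) *v x = c *\<^sub>R x"
proof -
  have "mat c = c *\<^sub>R (mat 1 :: real^'n^'n)"
    by (simp add: vec_eq_iff mat_def)
  then show ?thesis
    by (simp flip: scaleR_matrix_vector_assoc)
qed

definition self_adjoint :: "real^'n^'n \<Rightarrow> bool" where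
  "self_adjoint S \<longleftrightarrow> (\<forall>x y. x \<bullet> (S *v y) = (S *v x) \<bullet> y)"

lemma self_adjointD: "self_adjoint S \<Longrightarrow> x \<bullet> (S *v y) = y \<bullet> (S *v x)"
  unfolding self_adjoint_def by (metis inner_commute)

lemma self_adjoint_if_transpose_eq: "transpose S = S \<Longrightarrow> self_adjoint S"
  unfolding self_adjoint_def by (metis dot_lmul_matrix vector_transpose_matrix)

lemma self_adjoint_add: "self_adjoint S \<Longrightarrow> self_adjoint T \<Longrightarrow> self_adjoint (S + T)"
  unfolding self_adjoint_def by (simp add: matrix_vector_mult_add_rdistrib inner_add_left inner_add_right)

lemma self_adjoint_diff: "self_adjoint S \<Longrightarrow> self_adjoint T \<Longrightarrow> self_adjoint (S - T)"
  unfolding self_adjoint_def by (simp add: matrix_vector_mult_diff_rdistrib inner_diff_left inner_diff_right)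

lemma self_adjoint_scaleR: "self_adjoint S \<Longrightarrow> self_adjoint (c *\<^sub>R S)"
  unfolding self_adjoint_def by (simp flip: scaleR_matrix_vector_assoc)

lemma self_adjoint_mat: "self_adjoint (mat c :: real^'n^'n)"
  by (simp add: self_adjoint_if_transpose_eq)

lemma self_adjoint_sum:
  "(\<And>i. i \<in> I \<Longrightarrow> self_adjoint (S i)) \<Longrightarrow> self_adjoint (\<Sum>i\<in>I. S i)"
  by (induction I rule: infinite_finite_induct)
    (auto simp: self_adjoint_add intro: self_adjoint_mat[of 0, simplified])

lemma self_adjoint_gram: "self_adjoint (transpose A ** A)"
  by (rule self_adjoint_if_transpose_eq) (simp add: matrix_transpose_mul)

lemma quadratic_form_gram: "u \<bullet> ((transpose A ** A) *v u) = (norm (A *v u))\<^sup>2"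
  for A :: "real^'n^'m"
proof -
  have "u \<bullet> ((transpose A ** A) *v u) = ((A *v u) v* A) \<bullet> u"
    by (simp flip: matrix_vector_mul_assoc add: inner_commute)
  then show ?thesis
    by (simp add: dot_lmul_matrix power2_norm_eq_inner)
qed

lemma norm_matrix_vector_le_spec_norm: "norm (A *v x) \<le> spec_norm A * norm x"
  unfolding spec_norm_def by (rule onorm[OF matrix_vector_mul_bounded_linear])

lemma spec_norm_nonneg: "0 \<le> spec_norm A"
  unfolding spec_norm_def by (rule onorm_pos_le[OF matrix_vector_mul_bounded_linear])

lemma abs_quadratic_form_le_spec_norm: "\<bar>u \<bullet> (A *v u)\<bar> \<le> spec_norm A * (norm u)\<^sup>2"
proof -
  have "\<bar>u \<bullet> (A *v u)\<bar> \<le> norm u * norm (A *v u)"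
    by (rule Cauchy_Schwarz_ineq2)
  also have "\<dots> \<le> norm u * (spec_norm A * norm u)"
    by (simp add: mult_left_mono norm_matrix_vector_le_spec_norm)
  finally show ?thesis
    by (simp add: power2_eq_square mult_ac)
qed

lemma invertible_if_quadratic_form_ge:
  fixes S :: "real^'n^'n"
  assumes "0 < c" and "\<And>u. c * (norm u)\<^sup>2 \<le> u \<bullet> (S *v u)"
  shows "invertible S"
proof -
  have "x = 0" if "S *v x = 0" for x
    using assms(2)[of x] that assms(1) by (auto simp: mult_le_0_iff)
  then show ?thesis
    using matrix_left_invertible_ker invertible_left_inverse by blast
qed

lemma matrix_inv_cancel:
  fixes S :: "real^'n^'n"
  assumes "invertible S"
  shows "S *v (matrix_inv S *v x) = x" and "matrix_inv S *v (S *v x) = x"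
proof -
  have "S ** matrix_inv S = mat 1 \<and> matrix_inv S ** S = mat 1"
    unfolding matrix_inv_def by (rule someI_ex) (use assms invertible_def in blast)
  then show "S *v (matrix_inv S *v x) = x" and "matrix_inv S *v (S *v x) = x"
    by (simp_all add: matrix_vector_mul_assoc)
qed

lemma self_adjoint_matrix_inv:
  fixes S :: "real^'n^'n"
  assumes "self_adjoint S" and "invertible S"
  shows "self_adjoint (matrix_inv S)"
  unfolding self_adjoint_def
proof (intro allI)
  fix x y
  have "x \<bullet> (matrix_inv S *v y) = (S *v (matrix_inv S *v x)) \<bullet> (matrix_inv S *v y)"
    by (simp add: matrix_inv_cancel assms(2))
  also have "\<dots> = (matrix_inv S *v x) \<bullet> (S *v (matrix_inv S *v y))"
    using assms(1) unfolding self_adjoint_def by metis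
  also have "\<dots> = (matrix_inv S *v x) \<bullet> y"
    by (simp add: matrix_inv_cancel assms(2))
  finally show "x \<bullet> (matrix_inv S *v y) = (matrix_inv S *v x) \<bullet> y" .
qed

lemma norm_matrix_inv_vector_le:
  fixes S :: "real^'n^'n"
  assumes "0 < c" and S: "\<And>u. c * (norm u)\<^sup>2 \<le> u \<bullet> (S *v u)"
  shows "norm (matrix_inv S *v v) \<le> norm v / c"
proof -
  define w where "w = matrix_inv S *v v"
  have "S *v w = v"
    unfolding w_def by (rule matrix_inv_cancel(1)[OF invertible_if_quadratic_form_ge[OF assms]])
  then have "c * (norm w)\<^sup>2 \<le> norm w * norm v"
    using S[of w] norm_cauchy_schwarz[of w v] by simp
  then have "c * norm w \<le> norm v"
    by (cases "w = 0") (auto simp: power2_eq_square)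
  then show ?thesis
    using assms(1) by (simp add: w_def field_simps)
qed

text \<open>The resolvent identity \<open>S\<inverse> - T\<inverse> = S\<inverse> (T - S) T\<inverse>\<close>.\<close>

lemma norm_matrix_inv_diff_le:
  fixes S T :: "real^'n^'n"
  assumes "0 < c"
    and S: "\<And>u. c * (norm u)\<^sup>2 \<le> u \<bullet> (S *v u)" and T: "\<And>u. c * (norm u)\<^sup>2 \<le> u \<bullet> (T *v u)"
  shows "norm (matrix_inv S *v r - matrix_inv T *v r) \<le> spec_norm (S - T) / c\<^sup>2 * norm r"
proof -
  define w where "w = matrix_inv T *v r"
  have "r = T *v w"
    unfolding w_def by (rule matrix_inv_cancel(1)[OF invertible_if_quadratic_form_ge[OF assms(1) T], symmetric])
  then have "matrix_inv S *v r - w = - (matrix_inv S *v ((S - T) *v w))"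
    by (simp add: matrix_vector_mult_diff_rdistrib matrix_vector_mult_diff_distrib
        matrix_inv_cancel(2)[OF invertible_if_quadratic_form_ge[OF assms(1) S]])
  then have "norm (matrix_inv S *v r - w) \<le> norm ((S - T) *v w) / c"
    using norm_matrix_inv_vector_le[OF assms(1) S] by simp
  also have "\<dots> \<le> spec_norm (S - T) * norm w / c"
    using norm_matrix_vector_le_spec_norm[of "S - T" w] assms(1) by (simp add: divide_right_mono)
  also have "\<dots> \<le> spec_norm (S - T) * (norm r / c) / c"
    using norm_matrix_inv_vector_le[OF assms(1) T, of r] spec_norm_nonneg[of "S - T"] assms(1)
    unfolding w_def by (intro divide_right_mono mult_left_mono) simp_all
  finally show ?thesis
    by (simp add: w_def power2_eq_square)
qed

section \<open>Extreme eigenvalues\<close>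

lemma quadratic_nonneg_imp_linear_coeff_zero:
  fixes a c :: real
  assumes "\<And>t. 0 \<le> 2 * t * c + t\<^sup>2 * a"
  shows "c = 0"
proof -
  define b where "b = \<bar>a\<bar>"
  define t where "t = - c / (b + 1)"
  have b: "0 \<le> b" "a \<le> b"
    by (simp_all add: b_def)
  then have bt: "(b + 1) * t = - c"
    by (simp add: t_def)
  have "0 \<le> (b + 1)\<^sup>2 * (2 * t * c + t\<^sup>2 * b)"
    using assms[of t] b mult_left_mono[of a b "t\<^sup>2"] by simp
  also have "\<dots> = 2 * ((b + 1) * t) * c * (b + 1) + ((b + 1) * t)\<^sup>2 * b"
    by (simp add: algebra_simps power2_eq_square)
  also have "\<dots> = - c\<^sup>2 * (b + 2)"
    unfolding bt by (simp add: algebra_simps power2_eq_square)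
  finally have "c\<^sup>2 * (b + 2) \<le> 0"
    by simp
  then show ?thesis
    using b by (simp add: mult_le_0_iff)
qed

lemma self_adjoint_nonneg_kernel:
  fixes T :: "real^'n^'n"
  assumes "self_adjoint T" and nonneg: "\<And>u. 0 \<le> u \<bullet> (T *v u)" and "v \<bullet> (T *v v) = 0"
  shows "T *v v = 0"
proof -
  define w where "w = T *v v"
  have "0 \<le> 2 * t * (w \<bullet> w) + t\<^sup>2 * (w \<bullet> (T *v w))" for t
  proof -
    have "0 \<le> (v + t *\<^sub>R w) \<bullet> (T *v (v + t *\<^sub>R w))"
      by (rule nonneg)
    also have "\<dots> = 2 * t * (w \<bullet> w) + t\<^sup>2 * (w \<bullet> (T *v w))"
      using self_adjointD[OF assms(1), of v w] assms(3)
      by (simp add: w_def matrix_vector_right_distrib matrix_vector_mult_scaleR inner_add_left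
          inner_add_right inner_commute power2_eq_square algebra_simps)
    finally show ?thesis .
  qed
  then have "w \<bullet> w = 0"
    by (rule quadratic_nonneg_imp_linear_coeff_zero)
  then show ?thesis
    by (simp add: w_def)
qed

lemma self_adjoint_max_eigenvalue:
  fixes S :: "real^'n^'n"
  assumes "self_adjoint S"
  obtains \<mu> where "\<mu> \<in> eigenvalues S" and "\<And>u. u \<bullet> (S *v u) \<le> \<mu> * (norm u)\<^sup>2"
proof -
  have "continuous_on (sphere 0 1) (\<lambda>u::real^'n. u \<bullet> (S *v u))"
    by (intro continuous_intros linear_continuous_on matrix_vector_mul_bounded_linear)
  moreover have "sphere (0::real^'n) 1 \<noteq> {}"
    using vector_choose_size[of 1] by auto
  ultimately obtain v where v: "v \<in> sphere 0 1"
    and vmax: "\<And>u. u \<in> sphere 0 1 \<Longrightarrow> u \<bullet> (S *v u) \<le> v \<bullet> (S *v v)"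
    using continuous_attains_sup[OF compact_sphere] by blast
  define \<mu> where "\<mu> = v \<bullet> (S *v v)"
  have bound: "u \<bullet> (S *v u) \<le> \<mu> * (norm u)\<^sup>2" for u
  proof (cases "u = 0")
    case False
    have "u \<bullet> (S *v u) = (norm u)\<^sup>2 * ((u /\<^sub>R norm u) \<bullet> (S *v (u /\<^sub>R norm u)))"
      using False by (simp add: matrix_vector_mult_scaleR power2_eq_square field_simps)
    also have "\<dots> \<le> (norm u)\<^sup>2 * \<mu>"
      using vmax[of "u /\<^sub>R norm u"] False by (simp add: \<mu>_def mult_left_mono)
    finally show ?thesis
      by (simp add: mult.commute)
  qed simp
  have "(mat \<mu> - S) *v v = 0"
  proof (rule self_adjoint_nonneg_kernel)
    show "self_adjoint (mat \<mu> - S)"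
      by (intro self_adjoint_diff self_adjoint_mat assms)
    show "0 \<le> u \<bullet> ((mat \<mu> - S) *v u)" for u
      using bound[of u] by (simp add: matrix_vector_mult_diff_rdistrib inner_diff_right power2_norm_eq_inner)
    show "v \<bullet> ((mat \<mu> - S) *v v) = 0"
      using v by (simp add: \<mu>_def matrix_vector_mult_diff_rdistrib inner_diff_right dot_square_norm)
  qed
  then have "\<mu> \<in> eigenvalues S"
    using v unfolding eigenvalues_def
    by (auto simp: matrix_vector_mult_diff_rdistrib intro!: exI[of _ v])
  then show ?thesis
    using bound that by blast
qed

lemma self_adjoint_min_eigenvalue:
  fixes S :: "real^'n^'n"
  assumes "self_adjoint S"
  obtains \<mu> where "\<mu> \<in> eigenvalues S" and "\<And>u. \<mu> * (norm u)\<^sup>2 \<le> u \<bullet> (S *v u)"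
proof -
  have neg: "(- S) *v u = - (S *v u)" for u
    by (simp add: vec_eq_iff matrix_vector_mult_def sum_negf)
  have "self_adjoint (- S)"
    using assms by (simp add: self_adjoint_def neg)
  obtain \<mu> where "\<mu> \<in> eigenvalues (- S)" and "\<And>u. u \<bullet> ((- S) *v u) \<le> \<mu> * (norm u)\<^sup>2"
    using self_adjoint_max_eigenvalue[OF \<open>self_adjoint (- S)\<close>] by blast
  moreover from this(1) obtain v where "v \<noteq> 0" and "- (S *v v) = \<mu> *\<^sub>R v"
    unfolding eigenvalues_def neg by blast
  then have "S *v v = (- \<mu>) *\<^sub>R v"
    by (simp add: minus_equation_iff[of "S *v v"])
  then have "- \<mu> \<in> eigenvalues S"
    unfolding eigenvalues_def using \<open>v \<noteq> 0\<close> by blast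
  ultimately show ?thesis
    using that[of "- \<mu>"] by (simp add: neg minus_le_iff)
qed

text \<open>Eigenvectors of distinct eigenvalues are orthogonal, hence independent, so there are
  at most \<open>CARD('n)\<close> eigenvalues.\<close>

lemma finite_eigenvalues:
  fixes S :: "real^'n^'n"
  assumes "self_adjoint S"
  shows "finite (eigenvalues S)"
proof -
  have "\<forall>\<mu>\<in>eigenvalues S. \<exists>v. v \<noteq> 0 \<and> S *v v = \<mu> *\<^sub>R v"
    by (simp add: eigenvalues_def)
  then obtain v where v: "\<And>\<mu>. \<mu> \<in> eigenvalues S \<Longrightarrow> v \<mu> \<noteq> 0 \<and> S *v v \<mu> = \<mu> *\<^sub>R v \<mu>"
    by (metis bchoice)
  have orth: "v \<mu> \<bullet> v \<nu> = 0" if "\<mu> \<in> eigenvalues S" "\<nu> \<in> eigenvalues S" "\<mu> \<noteq> \<nu>" for \<mu> \<nu>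
  proof -
    have "\<mu> * (v \<mu> \<bullet> v \<nu>) = \<nu> * (v \<mu> \<bullet> v \<nu>)"
      using self_adjointD[OF assms, of "v \<nu>" "v \<mu>"] v[OF that(1)] v[OF that(2)]
      by (simp add: inner_commute)
    then show ?thesis
      using that(3) by simp
  qed
  have inj: "inj_on v (eigenvalues S)"
  proof (rule inj_onI)
    fix \<mu> \<nu> assume "\<mu> \<in> eigenvalues S" "\<nu> \<in> eigenvalues S" "v \<mu> = v \<nu>"
    then show "\<mu> = \<nu>"
      using orth[of \<mu> \<nu>] v[of \<mu>] by auto
  qed
  have "pairwise orthogonal (v ` eigenvalues S)"
    unfolding pairwise_def orthogonal_def using orth by blast
  moreover have "0 \<notin> v ` eigenvalues S"
    using v by auto
  ultimately have "finite (v ` eigenvalues S)"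
    using pairwise_orthogonal_independent finiteI_independent by blast
  then show ?thesis
    using inj finite_imageD by blast
qed

lemma quadratic_form_le_Max_eigenvalues:
  fixes S :: "real^'n^'n"
  assumes "self_adjoint S"
  shows "u \<bullet> (S *v u) \<le> Max (eigenvalues S) * (norm u)\<^sup>2"
proof -
  obtain \<mu> where "\<mu> \<in> eigenvalues S" and "u \<bullet> (S *v u) \<le> \<mu> * (norm u)\<^sup>2"
    using self_adjoint_max_eigenvalue[OF assms] by metis
  moreover have "\<mu> \<le> Max (eigenvalues S)"
    using calculation(1) finite_eigenvalues[OF assms] by simp
  ultimately show ?thesis
    by (meson mult_right_mono order_trans zero_le_power2)
qed

lemma quadratic_form_ge_Min_eigenvalues:
  fixes S :: "real^'n^'n"
  assumes "self_adjoint S"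
  shows "Min (eigenvalues S) * (norm u)\<^sup>2 \<le> u \<bullet> (S *v u)"
proof -
  obtain \<mu> where "\<mu> \<in> eigenvalues S" and "\<mu> * (norm u)\<^sup>2 \<le> u \<bullet> (S *v u)"
    using self_adjoint_min_eigenvalue[OF assms] by metis
  moreover have "Min (eigenvalues S) \<le> \<mu>"
    using calculation(1) finite_eigenvalues[OF assms] by simp
  ultimately show ?thesis
    by (meson mult_right_mono order_trans zero_le_power2)
qed

section \<open>Preconditioned conjugate gradients\<close>

lemma diff_square_div_le:
  fixes b c t :: real
  assumes "0 < b" and "b \<le> c"
  shows "E - t\<^sup>2 / b \<le> E - 2 * t + c"
proof -
  have "t\<^sup>2 / c \<le> t\<^sup>2 / b"
    using assms by (simp add: frac_le)
  moreover have "0 \<le> (c - t)\<^sup>2 / c"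
    using assms by simp
  then have "2 * t - c \<le> t\<^sup>2 / c"
    using assms by (simp add: field_simps power2_eq_square)
  ultimately show ?thesis
    by simp
qed

definition error_energy :: "real^'n^'n \<Rightarrow> real^'n \<Rightarrow> real^'n \<Rightarrow> real" where
  "error_energy H y x = (y - x) \<bullet> (H *v (y - x))"

definition pcg_invariant ::
    "real^'n^'n \<Rightarrow> real^'n^'n \<Rightarrow> real^'n \<Rightarrow> (real^'n) \<times> (real^'n) \<times> (real^'n) \<Rightarrow> bool" where
  "pcg_invariant H P y st \<longleftrightarrow> (case st of (x, r, p) \<Rightarrow> r = H *v (y - x) \<and>
      (\<exists>\<beta> q. p = P *v r + \<beta> *\<^sub>R q \<and> r \<bullet> q = 0 \<and> p \<bullet> (H *v q) = 0))"

lemma quadratic_form_line: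
  assumes "self_adjoint H"
  shows "(e - a *\<^sub>R p) \<bullet> (H *v (e - a *\<^sub>R p))
    = e \<bullet> (H *v e) - 2 * a * (p \<bullet> (H *v e)) + a\<^sup>2 * (p \<bullet> (H *v p))"
  using self_adjointD[OF assms, of e p]
  by (simp add: matrix_vector_mult_diff_distrib matrix_vector_mult_scaleR inner_diff_left
      inner_diff_right power2_eq_square algebra_simps)

text \<open>\<open>\<kappa>\<close> bounds the contraction of the \<open>H\<close>-energy of the error by one step
  \<open>e \<mapsto> e - P H e\<close> of preconditioned Richardson iteration.\<close>

locale pcg_contraction =
  fixes H P :: "real^'n^'n" and \<kappa> :: real
  assumes self_adjoint_H: "self_adjoint H" and self_adjoint_P: "self_adjoint P"
    and H_pos: "\<And>u. u \<noteq> 0 \<Longrightarrow> 0 < u \<bullet> (H *v u)"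
    and contraction: "\<And>e. (e - P *v (H *v e)) \<bullet> (H *v (e - P *v (H *v e))) \<le> \<kappa> * (e \<bullet> (H *v e))"
    and kappa_nonneg: "0 \<le> \<kappa>" and kappa_less_1: "\<kappa> < 1"
begin

lemma H_nonneg: "0 \<le> u \<bullet> (H *v u)"
  using H_pos[of u] by (cases "u = 0") auto

lemma descent:
  assumes "r = H *v e"
  shows "(1 - \<kappa>) * (e \<bullet> r) + (P *v r) \<bullet> (H *v (P *v r)) \<le> 2 * (r \<bullet> (P *v r))"
proof -
  have "(e - P *v r) \<bullet> (H *v (e - P *v r)) = e \<bullet> r - 2 * (r \<bullet> (P *v r)) + (P *v r) \<bullet> (H *v (P *v r))"
    using self_adjointD[OF self_adjoint_H, of e "P *v r"] assms
    by (simp add: matrix_vector_mult_diff_distrib inner_diff_left inner_diff_right inner_commute)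
  then show ?thesis
    using contraction[of e] assms by (simp add: algebra_simps)
qed

lemma residual_eq_0:
  assumes "r = H *v e" and "r \<bullet> (P *v r) = 0"
  shows "e = 0"
proof -
  have "(1 - \<kappa>) * (e \<bullet> (H *v e)) \<le> 0"
    using descent[OF assms(1)] assms H_nonneg[of "P *v r"] by simp
  then have "e \<bullet> (H *v e) \<le> 0"
    using kappa_less_1 by (simp add: mult_le_0_iff)
  then show ?thesis
    using H_pos[of e] by force
qed

text \<open>The search direction \<open>p\<close> differs from the preconditioned residual \<open>P r\<close> by a
  multiple of an \<open>H\<close>-conjugate vector orthogonal to \<open>r\<close>; hence the exact line search along
  \<open>p\<close> is at least as good as the one along \<open>P r\<close>.\<close>

lemma pcg_invariant_direction:
  assumes "pcg_invariant H P y (x, r, p)"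
  shows "r \<bullet> p = r \<bullet> (P *v r)" and "p \<bullet> (H *v p) \<le> (P *v r) \<bullet> (H *v (P *v r))"
proof -
  obtain \<beta> q where p: "p = P *v r + \<beta> *\<^sub>R q" and "r \<bullet> q = 0" and pq: "p \<bullet> (H *v q) = 0"
    using assms by (auto simp: pcg_invariant_def)
  then show "r \<bullet> p = r \<bullet> (P *v r)"
    by (simp add: inner_add_right)
  have "P *v r = p - \<beta> *\<^sub>R q"
    using p by simp
  then have "(P *v r) \<bullet> (H *v (P *v r)) = p \<bullet> (H *v p) + \<beta>\<^sup>2 * (q \<bullet> (H *v q))"
    using quadratic_form_line[OF self_adjoint_H, of p \<beta> q] pq self_adjointD[OF self_adjoint_H, of p q]
    by simp
  then show "p \<bullet> (H *v p) \<le> (P *v r) \<bullet> (H *v (P *v r))"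
    using H_nonneg[of q] by simp
qed

lemma pcg_step_error_energy_le:
  assumes inv: "pcg_invariant H P y (x, r, p)"
  shows "error_energy H y (fst (pcg_step H P (x, r, p))) \<le> \<kappa> * error_energy H y x"
proof -
  define z where "z = P *v r"
  define a where "a = (r \<bullet> z) / (p \<bullet> (H *v p))"
  have r: "r = H *v (y - x)"
    using inv by (simp add: pcg_invariant_def)
  have rp: "r \<bullet> p = r \<bullet> z" and pHp_le: "p \<bullet> (H *v p) \<le> z \<bullet> (H *v z)"
    using pcg_invariant_direction[OF inv] by (simp_all add: z_def)
  have step: "fst (pcg_step H P (x, r, p)) = x + a *\<^sub>R p"
    by (simp add: pcg_step_def Let_def a_def z_def)
  have descent': "(1 - \<kappa>) * error_energy H y x + z \<bullet> (H *v z) \<le> 2 * (r \<bullet> z)"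
    using descent[OF r] by (simp add: error_energy_def z_def r inner_commute)
  show ?thesis
  proof (cases "p = 0")
    case True
    then have "y - x = 0"
      using residual_eq_0[OF r] rp by (simp add: z_def)
    then show ?thesis
      using step by (simp add: error_energy_def True)
  next
    case False
    then have pHp_pos: "0 < p \<bullet> (H *v p)"
      by (rule H_pos)
    have "y - (x + a *\<^sub>R p) = (y - x) - a *\<^sub>R p"
      by simp
    then have "error_energy H y (x + a *\<^sub>R p) = error_energy H y x - (r \<bullet> z)\<^sup>2 / (p \<bullet> (H *v p))"
      using quadratic_form_line[OF self_adjoint_H, of "y - x" a p] pHp_pos rp
      by (simp add: error_energy_def flip: r) (simp add: inner_commute a_def power2_eq_square field_simps)
    also have "\<dots> \<le> error_energy H y x - 2 * (r \<bullet> z) + z \<bullet> (H *v z)"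
      using pHp_pos pHp_le by (rule diff_square_div_le)
    also have "\<dots> \<le> \<kappa> * error_energy H y x"
      using descent' by (simp add: algebra_simps)
    finally show ?thesis
      by (simp add: step)
  qed
qed

lemma pcg_residual_update_orthogonal:
  assumes inv: "pcg_invariant H P y (x, r, p)" and pHp_pos: "0 < p \<bullet> (H *v p)"
  defines "r' \<equiv> r - ((r \<bullet> (P *v r)) / (p \<bullet> (H *v p))) *\<^sub>R (H *v p)"
  shows "r' \<bullet> p = 0" and "r' \<bullet> (P *v r) = 0"
proof -
  obtain \<beta> q where p: "p = P *v r + \<beta> *\<^sub>R q" and rq: "r \<bullet> q = 0" and pq: "p \<bullet> (H *v q) = 0"
    using inv by (auto simp: pcg_invariant_def)
  show r'p: "r' \<bullet> p = 0"
    using pHp_pos pcg_invariant_direction(1)[OF inv]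
    by (simp add: r'_def inner_diff_left inner_diff_right inner_commute)
  have "r' \<bullet> q = 0"
    using rq pq self_adjointD[OF self_adjoint_H, of q p]
    by (simp add: r'_def inner_diff_left inner_diff_right inner_commute)
  then show "r' \<bullet> (P *v r) = 0"
    using r'p by (simp add: p inner_add_right)
qed

lemma pcg_step_invariant:
  assumes inv: "pcg_invariant H P y (x, r, p)"
  shows "pcg_invariant H P y (pcg_step H P (x, r, p))"
proof -
  define a where "a = (r \<bullet> (P *v r)) / (p \<bullet> (H *v p))"
  define r' where "r' = r - a *\<^sub>R (H *v p)"
  define \<beta>' where "\<beta>' = (r' \<bullet> (P *v r')) / (r \<bullet> (P *v r))"
  have r: "r = H *v (y - x)"
    using inv by (simp add: pcg_invariant_def)
  have step: "pcg_step H P (x, r, p) = (x + a *\<^sub>R p, r', P *v r' + \<beta>' *\<^sub>R p)"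
    by (simp add: pcg_step_def Let_def a_def r'_def \<beta>'_def)
  have r': "r' = H *v (y - (x + a *\<^sub>R p))"
    by (simp add: r'_def r matrix_vector_mult_diff_distrib matrix_vector_mult_scaleR algebra_simps)
  show ?thesis
  proof (cases "r \<bullet> (P *v r) = 0")
    case True
    then have "y - x = 0"
      by (rule residual_eq_0[OF r])
    then have "r = 0"
      using r by simp
    then have "r' = 0" and "\<beta>' = 0"
      by (simp_all add: a_def r'_def \<beta>'_def)
    then show ?thesis
      using r' by (auto simp: step pcg_invariant_def intro!: exI[of _ 0])
  next
    case False
    then have "p \<noteq> 0"
      using pcg_invariant_direction(1)[OF inv] by auto
    then have pHp_pos: "0 < p \<bullet> (H *v p)"
      by (rule H_pos)
    then have "a \<noteq> 0"
      using False by (simp add: a_def)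
    note orth = pcg_residual_update_orthogonal[OF inv pHp_pos, folded a_def, folded r'_def]
    have "(P *v r') \<bullet> (H *v p) = ((P *v r') \<bullet> r - (P *v r') \<bullet> r') / a"
      using \<open>a \<noteq> 0\<close> by (simp add: r'_def inner_diff_right field_simps)
    also have "(P *v r') \<bullet> r = 0"
      using orth(2) self_adjointD[OF self_adjoint_P, of r r'] by (simp add: inner_commute)
    finally have "(P *v r') \<bullet> (H *v p) = - (r' \<bullet> (P *v r')) / a"
      by (simp add: inner_commute)
    then have conj: "(P *v r' + \<beta>' *\<^sub>R p) \<bullet> (H *v p) = 0"
      using pHp_pos False by (simp add: inner_add_left \<beta>'_def a_def field_simps)
    show ?thesis
      unfolding step pcg_invariant_def using r' orth(1) conj by (auto intro!: exI[of _ \<beta>'] exI[of _ p])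
  qed
qed

lemma pcg_error_energy_le:
  assumes "H *v y = g"
  shows "error_energy H y (pcg H P g s) \<le> \<kappa> ^ s * error_energy H y 0"
proof -
  have "pcg_invariant H P y ((pcg_step H P ^^ s) (0, g, P *v g))
    \<and> error_energy H y (fst ((pcg_step H P ^^ s) (0, g, P *v g))) \<le> \<kappa> ^ s * error_energy H y 0"
  proof (induction s)
    case 0
    show ?case
      using assms by (auto simp: pcg_invariant_def intro!: exI[of _ 0])
  next
    case (Suc s)
    obtain x r p where st: "(pcg_step H P ^^ s) (0, g, P *v g) = (x, r, p)"
      by (metis prod_cases3)
    with Suc.IH have inv: "pcg_invariant H P y (x, r, p)"
      and IH: "error_energy H y x \<le> \<kappa> ^ s * error_energy H y 0"
      by simp_all
    have "error_energy H y (fst (pcg_step H P (x, r, p))) \<le> \<kappa> * error_energy H y x"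
      by (rule pcg_step_error_energy_le[OF inv])
    also have "\<dots> \<le> \<kappa> * (\<kappa> ^ s * error_energy H y 0)"
      using IH kappa_nonneg by (rule mult_left_mono)
    finally show ?case
      using pcg_step_invariant[OF inv] st by simp
  qed
  then show ?thesis
    by (simp add: pcg_def)
qed

end

section \<open>Perturbation bounds\<close>

lemma quadratic_form_regularized_gram_ge:
  fixes B :: "real^'n^'m"
  assumes "0 \<le> c"
  shows "lam * (norm u)\<^sup>2 \<le> u \<bullet> ((c *\<^sub>R (transpose B ** B) + mat lam) *v u)"
  using assms by (simp add: matrix_vector_mult_add_rdistrib inner_add_right quadratic_form_gram
      power2_norm_eq_inner flip: scaleR_matrix_vector_assoc)

lemma self_adjoint_inv_regularized_gram:
  fixes B :: "real^'n^'m"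
  assumes "0 \<le> c" and "0 < lam"
  shows "self_adjoint (matrix_inv (c *\<^sub>R (transpose B ** B) + mat lam))"
  by (intro self_adjoint_matrix_inv self_adjoint_add self_adjoint_scaleR self_adjoint_gram
      self_adjoint_mat invertible_if_quadratic_form_ge[OF assms(2)] quadratic_form_regularized_gram_ge assms(1))

lemma quadratic_form_regularized_bounds:
  fixes S :: "real^'n^'n"
  assumes "self_adjoint S" and "\<And>u. 0 \<le> u \<bullet> (S *v u)"
  shows "(Min (eigenvalues S) + lam) * (norm u)\<^sup>2 \<le> u \<bullet> ((S + mat lam) *v u)"
    and "u \<bullet> ((S + mat lam) *v u) \<le> (Max (eigenvalues S) + lam) * (norm u)\<^sup>2"
    and "lam * (norm u)\<^sup>2 \<le> u \<bullet> ((S + mat lam) *v u)"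
  using quadratic_form_ge_Min_eigenvalues[OF assms(1), of u] quadratic_form_le_Max_eigenvalues[OF assms(1), of u]
    assms(2)[of u]
  by (simp_all add: matrix_vector_mult_add_rdistrib inner_add_right power2_norm_eq_inner algebra_simps)

lemma quadratic_form_bounds_perturbed:
  fixes S T :: "real^'n^'n"
  assumes "\<And>u. a * (norm u)\<^sup>2 \<le> u \<bullet> (S *v u)" and "\<And>u. u \<bullet> (S *v u) \<le> b * (norm u)\<^sup>2"
  shows "(a - spec_norm (S - T)) * (norm u)\<^sup>2 \<le> u \<bullet> (T *v u)"
    and "u \<bullet> (T *v u) \<le> (b + spec_norm (S - T)) * (norm u)\<^sup>2"
proof -
  have "u \<bullet> (T *v u) = u \<bullet> (S *v u) - u \<bullet> ((S - T) *v u)"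
    by (simp add: matrix_vector_mult_diff_rdistrib inner_diff_right)
  then show "(a - spec_norm (S - T)) * (norm u)\<^sup>2 \<le> u \<bullet> (T *v u)"
    and "u \<bullet> (T *v u) \<le> (b + spec_norm (S - T)) * (norm u)\<^sup>2"
    using assms[of u] abs_quadratic_form_le_spec_norm[of u "S - T"] by (auto simp: algebra_simps)
qed

lemma quadratic_form_bounds_le:
  fixes S :: "real^'n^'n"
  assumes "\<And>u. a * (norm u)\<^sup>2 \<le> u \<bullet> (S *v u)" and "\<And>u. u \<bullet> (S *v u) \<le> b * (norm u)\<^sup>2"
  shows "a \<le> b"
proof -
  obtain v :: "real^'n" where "norm v = 1"
    using vector_choose_size[of 1] by auto
  then show ?thesis
    using assms[of v] by simp
qed

lemma norm_sq_matrix_vector_le: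
  fixes H :: "real^'n^'n"
  assumes "self_adjoint H" and nonneg: "\<And>u. 0 \<le> u \<bullet> (H *v u)"
    and upper: "\<And>u. u \<bullet> (H *v u) \<le> L * (norm u)\<^sup>2" and "0 < L"
  shows "(norm (H *v e))\<^sup>2 \<le> L * (e \<bullet> (H *v e))"
proof -
  define r where "r = H *v e"
  have "0 \<le> (e - (1 / L) *\<^sub>R r) \<bullet> (H *v (e - (1 / L) *\<^sub>R r))"
    by (rule nonneg)
  also have "\<dots> = e \<bullet> r - 2 / L * (r \<bullet> r) + (1 / L)\<^sup>2 * (r \<bullet> (H *v r))"
    by (simp add: quadratic_form_line[OF assms(1)] r_def)
  also have "\<dots> \<le> e \<bullet> r - 2 / L * (r \<bullet> r) + (1 / L)\<^sup>2 * (L * (r \<bullet> r))"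
    using upper[of r] by (simp add: power2_norm_eq_inner mult_left_mono)
  also have "\<dots> = e \<bullet> r - (r \<bullet> r) / L"
    using assms(4) by (simp add: power2_eq_square field_simps)
  finally show ?thesis
    using assms(4) by (simp add: r_def power2_norm_eq_inner field_simps)
qed

lemma richardson_contraction_of_approx_inverse:
  fixes H P :: "real^'n^'n"
  assumes "self_adjoint H" and "0 < \<mu>"
    and lower: "\<And>u. \<mu> * (norm u)\<^sup>2 \<le> u \<bullet> (H *v u)" and upper: "\<And>u. u \<bullet> (H *v u) \<le> L * (norm u)\<^sup>2"
    and approx: "\<And>r. norm (P *v r - matrix_inv H *v r) \<le> \<delta> * norm r"
  shows "(e - P *v (H *v e)) \<bullet> (H *v (e - P *v (H *v e))) \<le> (L * \<delta>)\<^sup>2 * (e \<bullet> (H *v e))"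
proof -
  have nonneg: "0 \<le> u \<bullet> (H *v u)" for u
    using lower[of u] assms(2) by (smt (verit) mult_nonneg_nonneg zero_le_power2)
  have "0 < L"
    using quadratic_form_bounds_le[OF lower upper] assms(2) by simp
  define D where "D = e - P *v (H *v e)"
  have "norm D = norm (P *v (H *v e) - matrix_inv H *v (H *v e))"
    using matrix_inv_cancel(2)[OF invertible_if_quadratic_form_ge[OF assms(2) lower]]
    by (simp add: D_def norm_minus_commute)
  then have "(norm D)\<^sup>2 \<le> \<delta>\<^sup>2 * (norm (H *v e))\<^sup>2"
    using approx[of "H *v e"] by (metis norm_ge_zero power_mono power_mult_distrib)
  then have "D \<bullet> (H *v D) \<le> L * (\<delta>\<^sup>2 * (norm (H *v e))\<^sup>2)"
    using upper[of D] \<open>0 < L\<close> by (smt (verit) mult_left_mono)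
  also have "\<dots> \<le> L * (\<delta>\<^sup>2 * (L * (e \<bullet> (H *v e))))"
    using norm_sq_matrix_vector_le[OF assms(1) nonneg upper \<open>0 < L\<close>, of e] \<open>0 < L\<close>
    by (intro mult_left_mono) simp_all
  finally show ?thesis
    by (simp add: D_def power2_eq_square mult_ac)
qed

lemma norm_approx_inverse_le:
  fixes P E S T :: "real^'n^'n"
  assumes "0 < c"
    and "\<And>u. c * (norm u)\<^sup>2 \<le> u \<bullet> (S *v u)" and "\<And>u. c * (norm u)\<^sup>2 \<le> u \<bullet> (T *v u)"
  shows "norm (P *v r - matrix_inv T *v r)
    \<le> (spec_norm (S - T) / c\<^sup>2 + spec_norm (P - E) + spec_norm (E - matrix_inv S)) * norm r"
proof -
  have "P *v r - matrix_inv T *v r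
      = (P - E) *v r + (E - matrix_inv S) *v r + (matrix_inv S *v r - matrix_inv T *v r)"
    by (simp add: matrix_vector_mult_diff_rdistrib)
  then have "norm (P *v r - matrix_inv T *v r)
      \<le> norm ((P - E) *v r) + norm ((E - matrix_inv S) *v r) + norm (matrix_inv S *v r - matrix_inv T *v r)"
    by (metis norm_triangle_le order_refl add_mono)
  also have "\<dots> \<le> spec_norm (P - E) * norm r + spec_norm (E - matrix_inv S) * norm r
      + spec_norm (S - T) / c\<^sup>2 * norm r"
    by (intro add_mono norm_matrix_vector_le_spec_norm norm_matrix_inv_diff_le assms)
  finally show ?thesis
    by (simp add: algebra_simps)
qed

lemma pcg_error_le:
  fixes H P :: "real^'n^'n"
  assumes "self_adjoint H" and "self_adjoint P" and "0 < \<mu>"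
    and lower: "\<And>u. \<mu> * (norm u)\<^sup>2 \<le> u \<bullet> (H *v u)" and upper: "\<And>u. u \<bullet> (H *v u) \<le> L * (norm u)\<^sup>2"
    and approx: "\<And>r. norm (P *v r - matrix_inv H *v r) \<le> \<delta> * norm r"
    and "0 \<le> \<delta>" and "L * \<delta> < 1"
    and "H *v (w - w') = g"
  shows "norm (w - pcg H P g s - w') \<le> (L * \<delta>) ^ s * sqrt (L / \<mu>) * norm (w - w')"
proof -
  have "0 < L"
    using quadratic_form_bounds_le[OF lower upper] assms(3) by simp
  then have "0 \<le> L * \<delta>"
    using assms(7) by simp
  interpret pcg_contraction H P "(L * \<delta>)\<^sup>2"
  proof
    show "0 < u \<bullet> (H *v u)" if "u \<noteq> 0" for u
      using lower[of u] assms(3) that by (smt (verit) mult_pos_pos zero_less_norm_iff zero_less_power)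
    show "(L * \<delta>)\<^sup>2 < 1"
      using \<open>0 \<le> L * \<delta>\<close> assms(8) by (simp add: power_less_one_iff abs_square_less_1)
    show "(e - P *v (H *v e)) \<bullet> (H *v (e - P *v (H *v e))) \<le> (L * \<delta>)\<^sup>2 * (e \<bullet> (H *v e))" for e
      by (rule richardson_contraction_of_approx_inverse[OF assms(1,3) lower upper approx])
  qed (use assms in auto)
  define y where "y = w - w'"
  have "\<mu> * (norm (w - pcg H P g s - w'))\<^sup>2 \<le> error_energy H y (pcg H P g s)"
    using lower[of "y - pcg H P g s"] by (simp add: error_energy_def y_def algebra_simps)
  also have "\<dots> \<le> ((L * \<delta>)\<^sup>2) ^ s * error_energy H y 0"
    using pcg_error_energy_le assms(9) by (simp add: y_def)
  also have "\<dots> \<le> ((L * \<delta>)\<^sup>2) ^ s * (L * (norm y)\<^sup>2)"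
    using upper[of y] by (simp add: error_energy_def mult_left_mono)
  finally have bound: "\<mu> * (norm (w - pcg H P g s - w'))\<^sup>2 \<le> ((L * \<delta>)\<^sup>2) ^ s * (L * (norm y)\<^sup>2)" .
  have sq_eq: "((L * \<delta>) ^ s * sqrt (L / \<mu>) * norm y)\<^sup>2 = ((L * \<delta>)\<^sup>2) ^ s * (L * (norm y)\<^sup>2) / \<mu>"
    using assms(3) \<open>0 < L\<close> by (simp add: power_mult_distrib flip: power_mult) (simp add: mult.commute)
  have "(norm (w - pcg H P g s - w'))\<^sup>2 \<le> ((L * \<delta>) ^ s * sqrt (L / \<mu>) * norm y)\<^sup>2"
    unfolding sq_eq using bound assms(3) by (simp add: pos_le_divide_eq mult.commute)
  then show ?thesis
    using \<open>0 \<le> L * \<delta>\<close> \<open>0 < L\<close> assms(3) by (simp add: y_def power2_le_iff_abs_le)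
qed

lemma pow_le_pcg_rate:
  fixes \<alpha> :: real
  assumes "0 \<le> \<alpha>" and "\<alpha> < 1 / 2"
  shows "\<alpha> ^ s \<le> sqrt (4 * ((1 - sqrt (1 - \<alpha> / (1 - \<alpha>))) / (1 + sqrt (1 - \<alpha> / (1 - \<alpha>)))) ^ s)"
proof -
  define \<gamma> where "\<gamma> = \<alpha> / (1 - \<alpha>)"
  define \<beta> where "\<beta> = sqrt (1 - \<gamma>)"
  have \<gamma>: "4 * \<alpha>\<^sup>2 \<le> \<gamma>" "\<gamma> \<le> 1"
  proof -
    have "0 \<le> \<alpha> * (2 * \<alpha> - 1)\<^sup>2"
      using assms(1) by simp
    then show "4 * \<alpha>\<^sup>2 \<le> \<gamma>"
      using assms(2) by (simp add: \<gamma>_def pos_le_divide_eq algebra_simps power2_eq_square)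
    show "\<gamma> \<le> 1"
      using assms by (simp add: \<gamma>_def)
  qed
  have \<beta>: "0 \<le> \<beta>" "\<beta> \<le> 1" "(1 - \<beta>) * (1 + \<beta>) = \<gamma>"
    using \<gamma> assms by (auto simp: \<beta>_def \<gamma>_def algebra_simps)
  txt \<open>\<open>(1 - \<beta>) / (1 + \<beta>) = \<gamma> / (1 + \<beta>)\<^sup>2 \<ge> \<gamma> / 4 \<ge> \<alpha>\<^sup>2\<close>\<close>
  have "\<alpha>\<^sup>2 * (1 + \<beta>) \<le> (1 - \<beta>)"
  proof -
    have "\<alpha>\<^sup>2 * (1 + \<beta>) * (1 + \<beta>) \<le> \<alpha>\<^sup>2 * 4"
      using \<beta> mult_mono[of "1 + \<beta>" 2 "1 + \<beta>" 2] by (simp add: mult.assoc mult_left_mono)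
    also have "\<dots> \<le> (1 - \<beta>) * (1 + \<beta>)"
      using \<gamma> \<beta> by simp
    finally show ?thesis
      by (rule mult_right_le_imp_le) (use \<beta> in simp)
  qed
  then have "\<alpha>\<^sup>2 \<le> (1 - \<beta>) / (1 + \<beta>)"
    using \<beta> by (simp add: pos_le_divide_eq)
  then have "(\<alpha>\<^sup>2) ^ s \<le> ((1 - \<beta>) / (1 + \<beta>)) ^ s"
    by (rule power_mono) simp
  then have "(\<alpha> ^ s)\<^sup>2 \<le> ((1 - \<beta>) / (1 + \<beta>)) ^ s"
    by (simp flip: power_mult add: mult.commute)
  also have "\<dots> \<le> 4 * ((1 - \<beta>) / (1 + \<beta>)) ^ s"
    using \<beta> by simp
  finally show ?thesis
    using assms(1) by (simp add: real_le_rsqrt \<beta>_def \<gamma>_def)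
qed

lemma le_sqrt2_mult_div_sqrt:
  fixes x :: real
  assumes "0 \<le> x" and "x < 1"
  shows "x \<le> sqrt 2 * x / sqrt (1 - x\<^sup>2)"
proof -
  have "0 < 1 - x\<^sup>2"
    using assms by (simp add: abs_square_less_1)
  moreover have "1 - x\<^sup>2 \<le> 2"
    using zero_le_power2[of x] by linarith
  then have "x * sqrt (1 - x\<^sup>2) \<le> x * sqrt 2"
    using assms(1) by (intro mult_left_mono) auto
  then show ?thesis
    using \<open>0 < 1 - x\<^sup>2\<close> by (simp add: pos_le_divide_eq mult.commute)
qed

section \<open>Ridge regression\<close>

lemma has_derivative_ridge:
  fixes A :: "real^'d^'r"
  shows "((\<lambda>x. 1 / (2 * n) * (norm (A *v x - b))\<^sup>2 + lam / 2 * (norm x)\<^sup>2) has_derivative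
    (\<lambda>h. (((1 / n) *\<^sub>R (transpose A ** A) + mat lam) *v x - (1 / n) *\<^sub>R (transpose A *v b)) \<bullet> h)) (at x)"
proof -
  define v where "v = A *v x - b"
  have grad: "((1 / n) *\<^sub>R (transpose A ** A) + mat lam) *v x - (1 / n) *\<^sub>R (transpose A *v b)
      = (1 / n) *\<^sub>R (transpose A *v v) + lam *\<^sub>R x"
    by (simp add: v_def matrix_vector_mult_add_rdistrib matrix_vector_mult_diff_distrib algebra_simps
        flip: scaleR_matrix_vector_assoc matrix_vector_mul_assoc)
  have "(transpose A *v v) \<bullet> h = v \<bullet> (A *v h)" for h
    by (simp add: dot_lmul_matrix)
  then have deriv: "(\<lambda>h. 1 / (2 * n) * (v \<bullet> (A *v h - 0) + (A *v h - 0) \<bullet> v) + lam / 2 * (x \<bullet> h + h \<bullet> x))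
      = (\<lambda>h. (((1 / n) *\<^sub>R (transpose A ** A) + mat lam) *v x - (1 / n) *\<^sub>R (transpose A *v b)) \<bullet> h)"
    unfolding grad by (simp add: inner_add_left inner_add_right inner_commute field_simps)
  have "((\<lambda>x. 1 / (2 * n) * ((A *v x - b) \<bullet> (A *v x - b)) + lam / 2 * (x \<bullet> x)) has_derivative
    (\<lambda>h. 1 / (2 * n) * (v \<bullet> (A *v h - 0) + (A *v h - 0) \<bullet> v) + lam / 2 * (x \<bullet> h + h \<bullet> x))) (at x)"
    unfolding v_def
    by (intro derivative_intros bounded_linear_imp_has_derivative matrix_vector_mul_bounded_linear)
  then show ?thesis
    by (simp only: deriv power2_norm_eq_inner)
qed

lemma ridge_gradient_eq:
  fixes A :: "real^'d^'r"
  assumes f: "\<And>x. f x = 1 / (2 * n) * (norm (A *v x - b))\<^sup>2 + lam / 2 * (norm x)\<^sup>2"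
    and g: "\<And>x. (f has_derivative (\<lambda>h. g x \<bullet> h)) (at x)"
    and min: "\<And>x. f w' \<le> f x"
  shows "((1 / n) *\<^sub>R (transpose A ** A) + mat lam) *v (w - w') = g w"
proof -
  define H where "H = (1 / n) *\<^sub>R (transpose A ** A) + mat lam"
  define c where "c = (1 / n) *\<^sub>R (transpose A *v b)"
  have "f = (\<lambda>x. 1 / (2 * n) * (norm (A *v x - b))\<^sup>2 + lam / 2 * (norm x)\<^sup>2)"
    using f by blast
  then have "(\<lambda>h. g x \<bullet> h) = (\<lambda>h. (H *v x - c) \<bullet> h)" for x
    using g has_derivative_ridge H_def c_def by (blast intro: has_derivative_unique)
  then have gx: "g x = H *v x - c" for x
    using vector_eq_rdot by metis
  have "(\<lambda>h. g w' \<bullet> h) = (\<lambda>h. 0)"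
    using min by (intro differential_zero_maxmin[OF _ open_UNIV g]) auto
  then have "g w' = 0"
    using vector_eq_rdot[of "g w'" 0] by (simp add: fun_eq_iff)
  then show ?thesis
    using gx[of w] gx[of w'] by (simp add: H_def[symmetric] matrix_vector_mult_diff_distrib)
qed

lemma (in prob_space) second_moment_matrix_self_adjoint_nonneg:
  fixes X :: "'a \<Rightarrow> real^'d"
  assumes "\<And>i j. integrable M (\<lambda>v. X v $ i * X v $ j) \<and> expectation (\<lambda>v. X v $ i * X v $ j) = S $ i $ j"
  shows "self_adjoint S" and "0 \<le> u \<bullet> (S *v u)"
proof -
  show "self_adjoint S"
    by (rule self_adjoint_if_transpose_eq)
      (use assms in \<open>simp add: transpose_def vec_eq_iff flip: assms, simp add: mult.commute\<close>)
  have "u \<bullet> (S *v u) = (\<Sum>i\<in>UNIV. \<Sum>j\<in>UNIV. u $ i * u $ j * expectation (\<lambda>v. X v $ i * X v $ j))"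
    using assms by (simp add: inner_vec_def matrix_vector_mult_def sum_distrib_left mult_ac)
  also have "\<dots> = expectation (\<lambda>v. \<Sum>i\<in>UNIV. \<Sum>j\<in>UNIV. u $ i * u $ j * (X v $ i * X v $ j))"
    using assms by (simp add: Bochner_Integration.integral_sum integrable_sum)
  also have "\<dots> = expectation (\<lambda>v. (\<Sum>i\<in>UNIV. u $ i * X v $ i)\<^sup>2)"
    by (simp add: power2_eq_square sum_product mult_ac)
  also have "\<dots> \<ge> 0"
    by simp
  finally show "0 \<le> u \<bullet> (S *v u)" .
qed

theorem theorem3p2:
  fixes M :: "'w measure"
    and A :: "'w \<Rightarrow> real^'d::finite^('m::finite \<times> 'k::finite)"
    and Sigma :: "real^'d^'d"
    and \<omega> :: 'w
    and b :: "real^('m \<times> 'k)"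
    and lam :: real
    and f :: "real^'d \<Rightarrow> real"
    and g :: "real^'d \<Rightarrow> real^'d"
    and w_star w_t :: "real^'d"
    and s :: nat
  assumes n_def: "n = real CARD('m \<times> 'k)"
    and m_def: "m = real CARD('m)"
    and H_def: "H = (1 / n) *\<^sub>R (transpose (A \<omega>) ** A \<omega>) + mat lam"
    and d_lam_def: "d_lam = trace (Sigma ** matrix_inv (Sigma + mat lam))"
    and Htinv_def: "Htinv = (\<lambda>v. (1 / m) *\<^sub>R (\<Sum>i\<in>UNIV.
            matrix_inv ((1 / (1 - m * d_lam / n)) *\<^sub>R ((m / n) *\<^sub>R
               (transpose (\<chi> j. A v $ (i, j)) ** (\<chi> j. A v $ (i, j)))) + mat lam)))"
    and EHtinv_def: "EHtinv = (\<chi> i j. prob_space.expectation M (\<lambda>v. Htinv v $ i $ j))"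
    and w_next_def: "w_next = w_t - pcg H (Htinv \<omega>) (g w_t) s"
    and alpha0_def: "alpha0 = spec_norm (Sigma - (1 / n) *\<^sub>R (transpose (A \<omega>) ** A \<omega>))"
    and alpha1_def: "alpha1 = spec_norm (Htinv \<omega> - EHtinv)"
    and Omega0_def: "Omega0 = EHtinv - matrix_inv (Sigma + mat lam)"
    and sig_min_def: "sig_min = Min (eigenvalues Sigma)"
    and sig_max_def: "sig_max = Max (eigenvalues Sigma)"
    and alpha_def: "alpha = (sig_max + lam + alpha0) * (alpha0 / lam\<^sup>2 + alpha1 + spec_norm Omega0)"
    and alphap_def: "alpha' = sqrt (4 * ((1 - sqrt (1 - alpha / (1 - alpha)))
                             / (1 + sqrt (1 - alpha / (1 - alpha)))) ^ s)"
    and M: "prob_space M"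
    and \<omega>: "\<omega> \<in> space M"
    and rows_rv: "\<And>r. (\<lambda>v. A v $ r) \<in> borel_measurable M"
    and rows_indep: "prob_space.indep_vars M (\<lambda>_. borel) (\<lambda>r v. A v $ r) UNIV"
    and rows_ident: "\<And>r r'. distr M borel (\<lambda>v. A v $ r) = distr M borel (\<lambda>v. A v $ r')"
    and mean_zero: "\<And>r j. integrable M (\<lambda>v. A v $ r $ j)
                          \<and> prob_space.expectation M (\<lambda>v. A v $ r $ j) = 0"
    and cov: "\<And>r i j. integrable M (\<lambda>v. A v $ r $ i * A v $ r $ j)
                  \<and> prob_space.expectation M (\<lambda>v. A v $ r $ i * A v $ r $ j) = Sigma $ i $ j"
    and lam_pos: "lam > 0"
    and md_lt_n: "m * d_lam < n"
    and f_def: "\<And>x. f x = (1 / (2 * n)) * (norm (A \<omega> *v x - b))\<^sup>2 + (lam / 2) * (norm x)\<^sup>2"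
    and g_grad: "\<And>x. (f has_derivative (\<lambda>h. g x \<bullet> h)) (at x)"
    and w_star_min: "\<And>x. f w_star \<le> f x"
    and alpha_half: "alpha < 1 / 2"
    and alpha'_lt: "alpha' < 1"
    and alpha0_lt: "alpha0 < sig_min + lam"
  shows "norm (w_next - w_star)
           \<le> sqrt 2 * alpha' / sqrt (1 - alpha'\<^sup>2)
              * sqrt ((sig_max + lam + alpha0) / (sig_min + lam - alpha0))
              * norm (w_t - w_star)"
proof -
  txt \<open>The bound is deterministic given \<open>alpha0\<close>, \<open>alpha1\<close> and \<open>Omega0\<close>: of the
    distributional hypotheses only the second moments of a single row are used.\<close>
  define \<delta> where "\<delta> = alpha0 / lam\<^sup>2 + alpha1 + spec_norm Omega0"
  have Sigma: "self_adjoint Sigma" "\<And>u. 0 \<le> u \<bullet> (Sigma *v u)" for r :: "'m \<times> 'k"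
    using prob_space.second_moment_matrix_self_adjoint_nonneg[OF M, of "\<lambda>v. A v $ r"] cov by auto
  note Si = quadratic_form_regularized_bounds[OF Sigma, where lam = lam, folded sig_min_def sig_max_def]
  have Si_minus_H: "Sigma + mat lam - H = Sigma - (1 / n) *\<^sub>R (transpose (A \<omega>) ** A \<omega>)"
    by (simp add: H_def)
  have H_lam: "lam * (norm u)\<^sup>2 \<le> u \<bullet> (H *v u)" for u
    unfolding H_def by (rule quadratic_form_regularized_gram_ge) (simp add: n_def)
  have H_bounds: "(sig_min + lam - alpha0) * (norm u)\<^sup>2 \<le> u \<bullet> (H *v u)"
    "u \<bullet> (H *v u) \<le> (sig_max + lam + alpha0) * (norm u)\<^sup>2" for u
    using quadratic_form_bounds_perturbed[OF Si(1,2), where T = H] by (simp_all add: Si_minus_H alpha0_def)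
  have "0 < 1 - m * d_lam / n"
    using md_lt_n n_def by simp
  then have P: "self_adjoint (Htinv \<omega>)"
    unfolding Htinv_def scaleR_scaleR using lam_pos m_def n_def
    by (intro self_adjoint_scaleR self_adjoint_sum self_adjoint_inv_regularized_gram) simp_all
  have approx: "norm (Htinv \<omega> *v r - matrix_inv H *v r) \<le> \<delta> * norm r" for r
    using norm_approx_inverse_le[OF lam_pos Si(3) H_lam, of "Htinv \<omega>" r EHtinv]
    by (simp add: \<delta>_def Si_minus_H alpha0_def alpha1_def Omega0_def algebra_simps)
  have \<delta>_nonneg: "0 \<le> \<delta>"
    by (simp add: \<delta>_def alpha0_def alpha1_def spec_norm_nonneg)
  have alpha_eq: "alpha = (sig_max + lam + alpha0) * \<delta>"
    by (simp add: alpha_def \<delta>_def)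
  have "self_adjoint H"
    unfolding H_def by (intro self_adjoint_add self_adjoint_scaleR self_adjoint_gram self_adjoint_mat)
  moreover have "H *v (w_t - w_star) = g w_t"
    using ridge_gradient_eq[OF f_def g_grad w_star_min] by (simp add: H_def)
  ultimately have "norm (w_next - w_star)
      \<le> alpha ^ s * sqrt ((sig_max + lam + alpha0) / (sig_min + lam - alpha0)) * norm (w_t - w_star)"
    unfolding w_next_def alpha_eq using alpha0_lt alpha_half[unfolded alpha_eq] \<delta>_nonneg
    by (intro pcg_error_le[OF _ P _ H_bounds approx]) auto
  moreover have L_pos: "0 < sig_max + lam + alpha0"
    using quadratic_form_bounds_le[OF H_bounds] alpha0_lt by simp
  then have "0 \<le> alpha"
    using \<delta>_nonneg by (simp add: alpha_eq)
  then have "alpha ^ s \<le> alpha'"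
    using pow_le_pcg_rate[of alpha s] alpha_half by (simp add: alphap_def)
  then have "alpha ^ s \<le> sqrt 2 * alpha' / sqrt (1 - alpha'\<^sup>2)"
    using le_sqrt2_mult_div_sqrt[of alpha'] alpha'_lt \<open>0 \<le> alpha\<close> by (meson order_trans zero_le_power)
  ultimately show ?thesis
    using L_pos alpha0_lt by (elim order_trans) (intro mult_right_mono; simp)
qed

end
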